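(* For every finite directed acyclic graph $G=(N,E)$, the Geometric Mechanism satisfies $\frac{\sum_{i\in N}x_i(G)\,p_i}{p^*}\ge \frac12$, where $p^*=\max_{i\in N}p_i$. That is, the Geometric Mechanism has approximation ratio $1/2$ on the family of DAGs.
   Context: In a DAG $G=(N,E)$ with $N=\{1,\dots,n\}$, $P_i$ is the set of nodes having a directed path to $i$ (with $i\in P_i$), and $p_i=|P_i|$. Write $p_i\succ p_j$ if $p_i>p_j$, or $p_i=p_j$ and $i<j$. For a node $i$, let $G^{(i)}$ be the graph obtained from $G$ by deleting all out-edges of $i$. Node $i$ is influential if, with progeny measured in $G^{(i)}$, $p_i\succ p_j$ for all $j\ne i$. The influential set $\{s_1,\dots,s_m\}$ is the set of influential nodes, indexed so that $p_{s_1}\succ\cdots\succ p_{s_m}$, with progeny measured in $G$. The Geometric Mechanism selects $s_j$ with probability $x_{s_j}(G)=1/2^{m-j+1}$ for $j=1,\dots,m$, and selects every other node with probability $0$. *)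

theory Defs
  imports Complex_Main
begin

definition is_dag :: "nat \<Rightarrow> (nat \<times> nat) set \<Rightarrow> bool" where
  "is_dag n E \<longleftrightarrow> E \<subseteq> {1..n} \<times> {1..n} \<and> acyclic E"

definition progeny_set :: "nat \<Rightarrow> (nat \<times> nat) set \<Rightarrow> nat \<Rightarrow> nat set" where
  "progeny_set n E i = {j \<in> {1..n}. (j, i) \<in> E\<^sup>*}"

definition progeny :: "nat \<Rightarrow> (nat \<times> nat) set \<Rightarrow> nat \<Rightarrow> nat" where
  "progeny n E i = card (progeny_set n E i)"

definition prec_succ :: "nat \<Rightarrow> (nat \<times> nat) set \<Rightarrow> nat \<Rightarrow> nat \<Rightarrow> bool" where
  "prec_succ n E i j \<longleftrightarrow>
     progeny n E i > progeny n E j \<or> (progeny n E i = progeny n E j \<and> i < j)"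

definition del_out :: "(nat \<times> nat) set \<Rightarrow> nat \<Rightarrow> (nat \<times> nat) set" where
  "del_out E i = {(a, b) \<in> E. a \<noteq> i}"

definition influential :: "nat \<Rightarrow> (nat \<times> nat) set \<Rightarrow> nat \<Rightarrow> bool" where
  "influential n E i \<longleftrightarrow> i \<in> {1..n} \<and>
     (\<forall>j \<in> {1..n}. j \<noteq> i \<longrightarrow> prec_succ n (del_out E i) i j)"

definition influential_set :: "nat \<Rightarrow> (nat \<times> nat) set \<Rightarrow> nat set" where
  "influential_set n E = {i \<in> {1..n}. influential n E i}"

text \<open>Index j of an influential node s_j in the ordering p_{s_1} \<succ> ... \<succ> p_{s_m}
  (progeny measured in G): j = 1 + number of influential nodes ranked above it.\<close>
definition infl_index :: "nat \<Rightarrow> (nat \<times> nat) set \<Rightarrow> nat \<Rightarrow> nat" where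
  "infl_index n E i = card {k \<in> influential_set n E. prec_succ n E k i} + 1"

definition geom_mech :: "nat \<Rightarrow> (nat \<times> nat) set \<Rightarrow> nat \<Rightarrow> real" where
  "geom_mech n E i =
     (if i \<in> influential_set n E
      then 1 / 2 ^ (card (influential_set n E) - infl_index n E i + 1)
      else 0)"

end

theory Submission
  imports Defs
begin

(* Let t be the node ranked first by \<succ> in G, so p_t = p*. Deleting the out-edges of t does
  not change p_t and can only shrink the other progenies, so t is influential; it is ranked
  first among the influential nodes and receives weight 1/2^m. Any other influential node i
  beats t in G^(i), while every path to t that is lost in G^(i) passes through i; hence
  p* \<le> p_t(G^(i)) + p_i \<le> 2 p_i. The weights sum to 1 - 1/2^m, so the expected progeny is at
  least p*/2^m + (1 - 2/2^m) p*/2 = p*/2. *)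

lemma rtrancl_del_out_subset: "(del_out E a)\<^sup>* \<subseteq> E\<^sup>*"
  by (rule rtrancl_mono) (auto simp: del_out_def)

(* A path to i can be cut at its first visit to i, so it uses no out-edge of i. *)
lemma rtrancl_del_out_to_self:
  assumes "(j, i) \<in> E\<^sup>*"
  shows "(j, i) \<in> (del_out E i)\<^sup>*"
  using assms
proof (induction rule: converse_rtrancl_induct)
  case base
  then show ?case by simp
next
  case (step y z)
  show ?case
  proof (cases "y = i")
    case False
    then have "(y, z) \<in> del_out E i" using step.hyps by (simp add: del_out_def)
    then show ?thesis using step.IH by (rule converse_rtrancl_into_rtrancl)
  qed simp
qed

lemma rtrancl_del_out_if_not_reaches:
  assumes "(j, t) \<in> E\<^sup>*" and "(j, i) \<notin> E\<^sup>*"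
  shows "(j, t) \<in> (del_out E i)\<^sup>*"
  using assms
proof (induction rule: converse_rtrancl_induct)
  case base
  then show ?case by simp
next
  case (step y z)
  have "(z, i) \<notin> E\<^sup>*" using step.hyps(1) step.prems by (meson converse_rtrancl_into_rtrancl)
  moreover have "(y, z) \<in> del_out E i" using step.hyps(1) step.prems by (auto simp: del_out_def)
  ultimately show ?case using step.IH by (meson converse_rtrancl_into_rtrancl)
qed

lemma progeny_del_out_self: "progeny n (del_out E i) i = progeny n E i"
proof -
  have "progeny_set n (del_out E i) i = progeny_set n E i"
    using rtrancl_del_out_subset rtrancl_del_out_to_self by (fastforce simp: progeny_set_def)
  then show ?thesis by (simp add: progeny_def)
qed

lemma progeny_del_out_le: "progeny n (del_out E i) j \<le> progeny n E j"
proof -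
  have "progeny_set n (del_out E i) j \<subseteq> progeny_set n E j"
    using rtrancl_del_out_subset by (auto simp: progeny_set_def)
  then show ?thesis unfolding progeny_def by (intro card_mono) (auto simp: progeny_set_def)
qed

lemma progeny_le_progeny_del_out_add:
  "progeny n E t \<le> progeny n (del_out E i) t + progeny n E i"
proof -
  have "progeny_set n E t \<subseteq> progeny_set n (del_out E i) t \<union> progeny_set n E i"
    using rtrancl_del_out_if_not_reaches by (auto simp: progeny_set_def)
  then have "progeny n E t \<le> card (progeny_set n (del_out E i) t \<union> progeny_set n E i)"
    unfolding progeny_def by (intro card_mono) (auto simp: progeny_set_def)
  also have "\<dots> \<le> progeny n (del_out E i) t + progeny n E i"
    unfolding progeny_def by (rule card_Un_le)
  finally show ?thesis .
qed

lemma progeny_pos: "i \<in> {1..n} \<Longrightarrow> 0 < progeny n E i"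
  by (auto simp: progeny_def progeny_set_def card_gt_0_iff)

lemma prec_succ_trans: "prec_succ n E a b \<Longrightarrow> prec_succ n E b c \<Longrightarrow> prec_succ n E a c"
  unfolding prec_succ_def by auto

lemma prec_succ_irrefl: "\<not> prec_succ n E a a"
  unfolding prec_succ_def by auto

lemma prec_succ_total: "a \<noteq> b \<Longrightarrow> prec_succ n E a b \<or> prec_succ n E b a"
  unfolding prec_succ_def by auto

lemma prec_succ_del_out: "prec_succ n E i j \<Longrightarrow> prec_succ n (del_out E i) i j"
  using progeny_del_out_self[of n E i] progeny_del_out_le[of n E i j]
  unfolding prec_succ_def by auto

lemma influential_le_twice_progeny:
  assumes "influential n E i" and "t \<in> {1..n}" and "t \<noteq> i"
  shows "progeny n E t \<le> 2 * progeny n E i"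
proof -
  have "prec_succ n (del_out E i) i t" using assms unfolding influential_def by auto
  then have "progeny n (del_out E i) t \<le> progeny n E i"
    using progeny_del_out_self[of n E i] unfolding prec_succ_def by auto
  then show ?thesis using progeny_le_progeny_del_out_add[of n E t i] by linarith
qed

lemma prec_succ_greatest_exists:
  assumes "1 \<le> n"
  obtains t where "t \<in> {1..n}" and "progeny n E t = Max (progeny n E ` {1..n})"
    and "\<And>j. j \<in> {1..n} \<Longrightarrow> j \<noteq> t \<Longrightarrow> prec_succ n E t j"
proof -
  let ?p = "progeny n E"
  define T where "T = {i \<in> {1..n}. ?p i = Max (?p ` {1..n})}"
  have "Max (?p ` {1..n}) \<in> ?p ` {1..n}" using assms by (intro Max_in) auto
  then have "T \<noteq> {}" unfolding T_def by auto
  then have "Min T \<in> T" by (intro Min_in) (simp_all add: T_def)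
  moreover have "prec_succ n E (Min T) j" if "j \<in> {1..n}" "j \<noteq> Min T" for j
  proof -
    have "?p j \<le> Max (?p ` {1..n})" using that(1) by simp
    moreover have "?p j = Max (?p ` {1..n}) \<Longrightarrow> Min T \<le> j" using that(1) by (simp add: T_def)
    ultimately show ?thesis using \<open>Min T \<in> T\<close> that(2) by (auto simp: T_def prec_succ_def)
  qed
  ultimately show ?thesis using that unfolding T_def by blast
qed

lemma infl_index_less:
  assumes "i \<in> influential_set n E" and "k \<in> influential_set n E" and "prec_succ n E i k"
  shows "infl_index n E i < infl_index n E k"
proof -
  have "{l \<in> influential_set n E. prec_succ n E l i} \<subset> {l \<in> influential_set n E. prec_succ n E l k}"
    using assms prec_succ_trans prec_succ_irrefl by blast
  then show ?thesis
    unfolding infl_index_def by (simp add: psubset_card_mono influential_set_def)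
qed

lemma inj_on_infl_index: "inj_on (infl_index n E) (influential_set n E)"
  by (rule inj_onI) (metis infl_index_less less_irrefl prec_succ_total)

lemma infl_index_le_card:
  assumes "i \<in> influential_set n E"
  shows "infl_index n E i \<le> card (influential_set n E)"
proof -
  let ?S = "influential_set n E"
  have "finite ?S" by (simp add: influential_set_def)
  have "{l \<in> ?S. prec_succ n E l i} \<subseteq> ?S - {i}" using prec_succ_irrefl by blast
  then have "card {l \<in> ?S. prec_succ n E l i} \<le> card (?S - {i})"
    using \<open>finite ?S\<close> by (intro card_mono) auto
  moreover have "card (?S - {i}) < card ?S"
    using assms \<open>finite ?S\<close> by (intro psubset_card_mono) auto
  ultimately show ?thesis unfolding infl_index_def by linarith
qed

lemma infl_index_image:
  "infl_index n E ` influential_set n E = {1..card (influential_set n E)}"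
proof -
  have "infl_index n E ` influential_set n E \<subseteq> {1..card (influential_set n E)}"
    using infl_index_le_card by (auto simp: infl_index_def)
  moreover have "card (infl_index n E ` influential_set n E) = card (influential_set n E)"
    using inj_on_infl_index by (rule card_image)
  ultimately show ?thesis by (intro card_subset_eq) auto
qed

lemma sum_inverse_powers_of_two: "(\<Sum>j=1..m. 1 / 2 ^ (m - j + 1) :: real) = 1 - 1 / 2 ^ m"
proof (induction m)
  case (Suc m)
  have "(\<Sum>j=1..Suc m. 1 / 2 ^ (Suc m - j + 1) :: real) = (\<Sum>j=1..m. 1 / 2 ^ (m - j + 1)) / 2 + 1 / 2"
    by (simp add: sum_divide_distrib Suc_diff_le)
  then show ?case using Suc.IH by (simp add: field_simps)
qed simp

lemma sum_geom_mech:
  "(\<Sum>i\<in>influential_set n E. geom_mech n E i) = 1 - 1 / 2 ^ card (influential_set n E)"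
proof -
  let ?S = "influential_set n E" and ?m = "card (influential_set n E)"
  have "(\<Sum>i\<in>?S. geom_mech n E i) = (\<Sum>i\<in>?S. 1 / 2 ^ (?m - infl_index n E i + 1))"
    by (simp add: geom_mech_def)
  also have "\<dots> = (\<Sum>j\<in>infl_index n E ` ?S. 1 / 2 ^ (?m - j + 1))"
    by (simp add: sum.reindex inj_on_infl_index)
  also have "\<dots> = 1 - 1 / 2 ^ ?m"
    unfolding infl_index_image by (rule sum_inverse_powers_of_two)
  finally show ?thesis .
qed

lemma greatest_geom_mech:
  assumes "t \<in> {1..n}" and "\<And>j. j \<in> {1..n} \<Longrightarrow> j \<noteq> t \<Longrightarrow> prec_succ n E t j"
  shows "t \<in> influential_set n E" and "geom_mech n E t = 1 / 2 ^ card (influential_set n E)"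
proof -
  let ?S = "influential_set n E"
  show "t \<in> ?S" using assms prec_succ_del_out by (simp add: influential_set_def influential_def)
  have "{k \<in> ?S. prec_succ n E k t} = {}"
    using assms(2) prec_succ_trans prec_succ_irrefl by (fastforce simp: influential_set_def)
  then have "infl_index n E t = 1" unfolding infl_index_def by (simp only: card.empty)
  moreover have "0 < card ?S" using \<open>t \<in> ?S\<close> by (auto simp: card_gt_0_iff influential_set_def)
  ultimately show "geom_mech n E t = 1 / 2 ^ card ?S" using \<open>t \<in> ?S\<close> by (simp add: geom_mech_def)
qed

lemma weighted_sum_ge_half:
  fixes w f :: "'a \<Rightarrow> real"
  assumes "finite S" and "t \<in> S" and "\<And>i. i \<in> S \<Longrightarrow> 0 \<le> w i"
    and "w t + sum w S = 1" and "M \<le> f t" and "\<And>i. i \<in> S \<Longrightarrow> i \<noteq> t \<Longrightarrow> M \<le> 2 * f i"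
  shows "M / 2 \<le> (\<Sum>i\<in>S. w i * f i)"
proof -
  have half_le: "M / 2 \<le> f i" if "i \<in> S - {t}" for i using assms(6) that by fastforce
  have "2 * w t + sum w (S - {t}) = 1" using assms(1,2,4) by (simp add: sum.remove)
  then have "M / 2 = w t * M + sum w (S - {t}) * (M / 2)" by algebra
  also have "\<dots> = w t * M + (\<Sum>i\<in>S - {t}. w i * (M / 2))" by (simp add: sum_distrib_right)
  also have "\<dots> \<le> w t * f t + (\<Sum>i\<in>S - {t}. w i * f i)"
    using assms(2,3,5) half_le
    by (intro add_mono mult_left_mono sum_mono) auto
  also have "\<dots> = (\<Sum>i\<in>S. w i * f i)" using assms(1,2) by (simp add: sum.remove)
  finally show ?thesis .
qed

theorem theorem2:
  fixes n :: nat and E :: "(nat \<times> nat) set"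
  assumes "n \<ge> 1" and "is_dag n E"
  shows "(\<Sum>i\<in>{1..n}. geom_mech n E i * real (progeny n E i))
           / real (Max ((\<lambda>i. progeny n E i) ` {1..n})) \<ge> 1 / 2"
proof -
  let ?p = "progeny n E" and ?S = "influential_set n E"
  obtain t where t: "t \<in> {1..n}" and pt: "?p t = Max (?p ` {1..n})"
    and top: "\<And>j. j \<in> {1..n} \<Longrightarrow> j \<noteq> t \<Longrightarrow> prec_succ n E t j"
    using prec_succ_greatest_exists[OF assms(1)] by blast
  have "t \<in> ?S" and "geom_mech n E t = 1 / 2 ^ card ?S"
    using greatest_geom_mech[OF t top] by blast+
  then have weights: "geom_mech n E t + sum (geom_mech n E) ?S = 1" by (simp add: sum_geom_mech)
  have "real (?p t) / 2 \<le> (\<Sum>i\<in>?S. geom_mech n E i * real (?p i))"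
  proof (rule weighted_sum_ge_half[OF _ \<open>t \<in> ?S\<close> _ weights])
    show "real (?p t) \<le> 2 * real (?p i)" if "i \<in> ?S" "i \<noteq> t" for i
      using influential_le_twice_progeny[of n E i t] that t by (simp add: influential_set_def)
  qed (auto simp: influential_set_def geom_mech_def)
  also have "\<dots> = (\<Sum>i\<in>{1..n}. geom_mech n E i * real (?p i))"
    by (intro sum.mono_neutral_left) (auto simp: influential_set_def geom_mech_def)
  finally show ?thesis using pt progeny_pos[OF t, of E] by (simp add: field_simps)
qed

end
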